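(* For complex $a,c$ with $|ac|<1$, \begin{align*} \sum_{n=0}^\infty \bigl(1-q^{2n+1}\bigr) \frac{\bigl(q^2/a, q^2/c; q^2\bigr)_n}{\bigl(q^2 a, q^2c; q^2\bigr)_n} (ac)^n \sum_{j=-n}^n (-1)^j q^{n^2-j^2} =\frac{\bigl(q^2, ac; q^2\bigr)_\infty}{\bigl(q^2 a, q^2 c; q^2\bigr)_\infty}\sum_{n=0}^\infty \frac{\bigl(q^2/a, q^2/c; q^2\bigr)_n}{\bigl(1+q^{2n+1}\bigr)\bigl(q^4; q^4\bigr)_n} (-ac)^n. \end{align*}
   Context: Throughout, $q$ is a complex number with $0<|q|<1$. For $x\in\mathbb{C}$ and base $p\in\{q^2,q^4\}$, $(x;p)_\infty=\prod_{k=0}^\infty(1-xp^k)$ and, for an integer $n\ge 0$, $(x;p)_n=\prod_{k=0}^{n-1}(1-xp^k)$; also $(x_1,\dots,x_m;p)_n=(x_1;p)_n\cdots(x_m;p)_n$ for $n$ an integer or $\infty$. *)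

theory Defs
  imports "HOL-Analysis.Analysis"
begin

definition qpoch :: "complex \<Rightarrow> complex \<Rightarrow> nat \<Rightarrow> complex" where
  "qpoch x p n = (\<Prod>k<n. 1 - x * p ^ k)"

definition qpoch_inf :: "complex \<Rightarrow> complex \<Rightarrow> complex" where
  "qpoch_inf x p = (\<Prod>k. 1 - x * p ^ k)"

end

(*
  The pair
    alpha r = (1 - q^(2r+1)) * sum_{|j| <= r} (-1)^j q^(r^2 - j^2),
    beta n  = (-1)^n / ((1 + q^(2n+1)) (q^4;q^4)_n)
  is a Bailey pair relative to q^2 in base q^2, i.e.
    beta n = sum_{r <= n} alpha r / ((q^2;q^2)_(n-r) (q^2;q^2)_(n+r+1)).
  To see this, sum over r before j: for fixed |j| = m the sum over r telescopes to
  1 / ((q^2;q^2)_(n-m) (q^2;q^2)_(n+m) (1 + q^(2n+1))), and the remaining alternating sum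
  sum_k (-1)^k / ((q^2;q^2)_k (q^2;q^2)_(2n-k)) equals 1 / (q^4;q^4)_n by a recursion in n.

  The theorem is then the limiting case of Bailey's lemma: multiply beta n by
  (q^2/a;q^2)_n (q^2/c;q^2)_n (ac)^n and sum over n. Since |ac| < 1 the resulting double
  series converges absolutely, and summing it over n >= r first gives a q-Gauss sum
  2phi1(q^(2r+2)/a, q^(2r+2)/c; q^(4r+4); q^2, ac), which produces the factor in front of alpha r.
  The q-Gauss sum in turn follows from a contiguous relation in the first numerator parameter,
  iterated until that parameter tends to 0.
*)

theory Submission
  imports Defs
begin

section \<open>q-Pochhammer symbols\<close>

definition qpoch_nonvanishing :: "complex \<Rightarrow> complex \<Rightarrow> bool" where
  "qpoch_nonvanishing x p \<longleftrightarrow> (\<forall>k. x * p ^ k \<noteq> 1)"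

lemma qpoch_0 [simp]: "qpoch x p 0 = 1"
  by (simp add: qpoch_def)

lemma qpoch_0_left [simp]: "qpoch 0 p n = 1"
  by (simp add: qpoch_def)

lemma qpoch_Suc: "qpoch x p (Suc n) = qpoch x p n * (1 - x * p ^ n)"
  by (simp add: qpoch_def)

lemma qpoch_Suc_left: "qpoch x p (Suc n) = (1 - x) * qpoch (x * p) p n"
  unfolding qpoch_def by (subst prod.lessThan_Suc_shift) (simp add: mult.assoc)

lemma qpoch_add: "qpoch x p (m + n) = qpoch x p m * qpoch (x * p ^ m) p n"
  by (induction n) (simp_all add: qpoch_Suc power_add mult.assoc)

lemma qpoch_nonvanishing_shift:
  "qpoch_nonvanishing x p \<Longrightarrow> qpoch_nonvanishing (x * p ^ m) p"
  unfolding qpoch_nonvanishing_def by (metis mult.assoc power_add)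

lemma qpoch_nonzero: "qpoch_nonvanishing x p \<Longrightarrow> qpoch x p n \<noteq> 0"
  unfolding qpoch_nonvanishing_def qpoch_def by auto

lemma qpoch_nonvanishing_if_norm_less:
  assumes "norm p \<le> 1" and "norm x < 1"
  shows "qpoch_nonvanishing x p"
proof -
  have "norm (x * p ^ k) < 1" for k
    using assms mult_right_le_one_le[of "norm x" "norm p ^ k"]
    by (simp add: norm_mult norm_power power_le_one)
  then show ?thesis
    unfolding qpoch_nonvanishing_def by (metis norm_one less_irrefl)
qed

lemma summable_norm_qpoch_factor:
  fixes x p :: complex
  assumes "norm p < 1"
  shows "summable (\<lambda>k. norm (x * p ^ k))"
  unfolding norm_mult norm_power using assms by (intro summable_mult summable_geometric) simp

lemma LIMSEQ_qpoch:
  assumes "norm p < 1"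
  shows "(\<lambda>n. qpoch x p n) \<longlonglongrightarrow> qpoch_inf x p"
proof -
  have "abs_convergent_prod (\<lambda>k. 1 - x * p ^ k)"
    by (rule summable_imp_abs_convergent_prod)
       (use summable_norm_qpoch_factor[OF assms, of x] in simp)
  then have "(\<lambda>n. \<Prod>k\<le>n. 1 - x * p ^ k) \<longlonglongrightarrow> qpoch_inf x p"
    unfolding qpoch_inf_def
    by (intro convergent_prod_LIMSEQ abs_convergent_prod_imp_convergent_prod)
  then have "(\<lambda>n. qpoch x p (Suc n)) \<longlonglongrightarrow> qpoch_inf x p"
    by (simp add: qpoch_def lessThan_Suc_atMost)
  then show ?thesis
    by (rule LIMSEQ_imp_Suc)
qed

lemma qpoch_inf_nonzero:
  assumes "norm p < 1" and "qpoch_nonvanishing x p"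
  shows "qpoch_inf x p \<noteq> 0"
proof -
  have "summable (\<lambda>k. norm (- x * p ^ k))"
    using summable_norm_qpoch_factor[OF assms(1), of x] by simp
  then have "convergent_prod (\<lambda>k. 1 + - x * p ^ k)"
    by (rule summable_imp_convergent_prod_complex)
       (use assms(2) in \<open>auto simp: qpoch_nonvanishing_def\<close>)
  then show ?thesis
    unfolding qpoch_inf_def
    by (intro prodinf_nonzero) (use assms(2) in \<open>auto simp: qpoch_nonvanishing_def\<close>)
qed

lemma qpoch_inf_0_left [simp]: "qpoch_inf 0 p = 1"
  by (simp add: qpoch_inf_def)

lemma qpoch_inf_split:
  assumes "norm p < 1"
  shows "qpoch_inf x p = qpoch x p m * qpoch_inf (x * p ^ m) p"
proof (rule LIMSEQ_unique)
  show "(\<lambda>n. qpoch x p (n + m)) \<longlonglongrightarrow> qpoch_inf x p"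
    using LIMSEQ_qpoch[OF assms] by (rule LIMSEQ_ignore_initial_segment)
  show "(\<lambda>n. qpoch x p (n + m)) \<longlonglongrightarrow> qpoch x p m * qpoch_inf (x * p ^ m) p"
    unfolding add.commute[of _ m] qpoch_add
    by (intro tendsto_mult tendsto_const LIMSEQ_qpoch assms)
qed

lemma tendsto_qpoch [tendsto_intros]:
  "(f \<longlongrightarrow> x) F \<Longrightarrow> ((\<lambda>t. qpoch (f t) p n) \<longlongrightarrow> qpoch x p n) F"
  unfolding qpoch_def by (intro tendsto_intros)

lemma sum_power_le_geometric:
  fixes s :: real
  assumes "0 \<le> s" and "s < 1"
  shows "(\<Sum>k<n. s ^ k) \<le> 1 / (1 - s)"
  using assms by (simp add: sum_gp_strict divide_right_mono)

lemma norm_qpoch_le: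
  assumes p: "norm p < 1" and x: "norm x \<le> r"
  shows "norm (qpoch x p n) \<le> exp (r / (1 - norm p))"
proof -
  have "norm (qpoch x p n) \<le> (\<Prod>k<n. exp (norm x * norm p ^ k))"
    unfolding qpoch_def prod_norm[symmetric]
  proof (rule prod_mono)
    fix k
    have "norm (1 - x * p ^ k) \<le> 1 + norm x * norm p ^ k"
      using norm_triangle_ineq4[of 1 "x * p ^ k"] by (simp add: norm_mult norm_power)
    also have "\<dots> \<le> exp (norm x * norm p ^ k)"
      by (rule exp_ge_add_one_self)
    finally show "0 \<le> norm (1 - x * p ^ k) \<and> norm (1 - x * p ^ k) \<le> exp (norm x * norm p ^ k)"
      by simp
  qed
  also have "\<dots> = exp (norm x * (\<Sum>k<n. norm p ^ k))"
    by (simp add: exp_sum sum_distrib_left)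
  also have "\<dots> \<le> exp (r * (1 / (1 - norm p)))"
    using p x order_trans[OF norm_ge_zero x]
    by (intro exp_le_cancel_iff[THEN iffD2] mult_mono sum_power_le_geometric sum_nonneg) auto
  finally show ?thesis
    by simp
qed

lemma norm_qpoch_ge_half:
  assumes p: "norm p < 1" and x: "norm x \<le> (1 - norm p) / 2"
  shows "1 / 2 \<le> norm (qpoch x p n)"
proof -
  define t where "t k = norm x * norm p ^ k" for k
  have "norm x \<le> 1"
    using x norm_ge_zero[of p] by argo
  then have t: "t k \<in> {0..1}" for k
    using p mult_right_le_one_le[of "norm x" "norm p ^ k"]
    by (simp add: t_def power_le_one)
  have "sum t {..<n} = norm x * (\<Sum>k<n. norm p ^ k)"
    by (simp add: t_def sum_distrib_left)
  also have "\<dots> \<le> (1 - norm p) / 2 * (1 / (1 - norm p))"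
    using p x by (intro mult_mono sum_power_le_geometric sum_nonneg) auto
  also have "\<dots> = 1 / 2"
    using p by simp
  finally have "1 / 2 \<le> 1 - sum t {..<n}"
    by simp
  also have "\<dots> \<le> (\<Prod>k<n. 1 - t k)"
    by (rule Weierstrass_prod_ineq) (use t in auto)
  also have "\<dots> \<le> (\<Prod>k<n. norm (1 - x * p ^ k))"
  proof (rule prod_mono)
    fix k
    show "0 \<le> 1 - t k \<and> 1 - t k \<le> norm (1 - x * p ^ k)"
      using t[of k] norm_triangle_ineq2[of 1 "x * p ^ k"]
      by (simp add: t_def norm_mult norm_power)
  qed
  also have "\<dots> = norm (qpoch x p n)"
    by (simp add: qpoch_def prod_norm)
  finally show ?thesis .
qed

lemma qpoch_inverse_bounded:
  assumes "norm p < 1" and "qpoch_nonvanishing x p"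
  obtains C where "\<And>n. norm (inverse (qpoch x p n)) \<le> C"
proof -
  have "(\<lambda>n. inverse (qpoch x p n)) \<longlonglongrightarrow> inverse (qpoch_inf x p)"
    using assms by (intro tendsto_inverse LIMSEQ_qpoch qpoch_inf_nonzero)
  then have "Bseq (\<lambda>n. inverse (qpoch x p n))"
    by (rule convergent_imp_Bseq[OF convergentI])
  then show ?thesis
    using that unfolding Bseq_def by auto
qed

section \<open>The q-Gauss summation\<close>

definition phi21_term :: "complex \<Rightarrow> complex \<Rightarrow> complex \<Rightarrow> complex \<Rightarrow> complex \<Rightarrow> nat \<Rightarrow> complex" where
  "phi21_term a b c p z k = qpoch a p k * qpoch b p k / (qpoch p p k * qpoch c p k) * z ^ k"

lemma phi21_term_commute: "phi21_term a b c p z k = phi21_term b a c p z k"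
  unfolding phi21_term_def by (simp only: mult.commute[of "qpoch a p k"])

lemma norm_phi21_term_le:
  assumes p: "norm p < 1" and "norm a \<le> A" and "norm b \<le> B"
    and P: "\<And>k. norm (inverse (qpoch p p k)) \<le> P"
    and C: "\<And>k. norm (inverse (qpoch c p k)) \<le> C"
  shows "norm (phi21_term a b c p z k)
           \<le> exp (A / (1 - norm p)) * exp (B / (1 - norm p)) * (P * C) * norm z ^ k"
proof -
  have "norm (phi21_term a b c p z k)
        = norm (qpoch a p k) * norm (qpoch b p k)
          * (norm (inverse (qpoch p p k)) * norm (inverse (qpoch c p k))) * norm z ^ k"
    by (simp add: phi21_term_def norm_mult norm_divide norm_power norm_inverse divide_inverse)
  also have "\<dots> \<le> exp (A / (1 - norm p)) * exp (B / (1 - norm p)) * (P * C) * norm z ^ k"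
    using order_trans[OF norm_ge_zero P] order_trans[OF norm_ge_zero C]
    by (intro mult_mono norm_qpoch_le P C assms) auto
  finally show ?thesis .
qed

lemma summable_phi21_term:
  assumes p: "norm p < 1" and c: "qpoch_nonvanishing c p" and z: "norm z < 1"
  shows "summable (phi21_term a b c p z)"
proof -
  have "qpoch_nonvanishing p p"
    using p by (intro qpoch_nonvanishing_if_norm_less) auto
  then obtain P where P: "\<And>k. norm (inverse (qpoch p p k)) \<le> P"
    using qpoch_inverse_bounded[OF p] by blast
  obtain C where C: "\<And>k. norm (inverse (qpoch c p k)) \<le> C"
    using qpoch_inverse_bounded[OF p c] by blast
  define M where "M = exp (norm a / (1 - norm p)) * exp (norm b / (1 - norm p)) * (P * C)"
  show ?thesis
  proof (rule summable_comparison_test)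
    show "\<exists>N. \<forall>k\<ge>N. norm (phi21_term a b c p z k) \<le> M * norm z ^ k"
      using norm_phi21_term_le[OF p order_refl order_refl P C] by (auto simp: M_def)
    show "summable (\<lambda>k. M * norm z ^ k)"
      using z by (intro summable_mult summable_geometric) simp
  qed
qed

lemma phi21_contiguous_terms:
  fixes a b z p :: complex
  defines "t \<equiv> \<lambda>a. phi21_term a b (a * b * z) p z"
    and "s \<equiv> phi21_term (a * p) (b * p) (a * b * z * p) p z"
  assumes p: "qpoch_nonvanishing p p" and abz: "qpoch_nonvanishing (a * b * z) p"
  shows "(1 - a * b * z) * t a 0 - (1 - a * z) * t (a * p) 0 = a * z * (1 - b) * s 0"
    and "(1 - a * b * z) * t a (Suc k) - (1 - a * z) * t (a * p) (Suc k)
           = a * z * (1 - b) * (s (Suc k) - s k)"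
proof -
  show "(1 - a * b * z) * t a 0 - (1 - a * z) * t (a * p) 0 = a * z * (1 - b) * s 0"
    by (simp add: t_def s_def phi21_term_def algebra_simps)
next
  define g where "g = a * b * z"
  define P where "P = p ^ Suc k"
  define X where "X = qpoch (a * p) p k * qpoch (b * p) p k * z ^ k * (1 - b)
                      / (qpoch p p k * qpoch (g * p) p k)"
  have ne: "qpoch p p k \<noteq> 0" "qpoch (g * p) p k \<noteq> 0" "1 - P \<noteq> 0" "1 - g \<noteq> 0" "1 - g * P \<noteq> 0"
  proof -
    show "qpoch p p k \<noteq> 0"
      by (rule qpoch_nonzero[OF p])
    show "qpoch (g * p) p k \<noteq> 0"
      using qpoch_nonzero[OF qpoch_nonvanishing_shift[OF abz, of 1]] by (simp add: g_def)
    show "1 - P \<noteq> 0"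
      using p unfolding qpoch_nonvanishing_def P_def by simp
    show "1 - g \<noteq> 0"
      using abz[unfolded qpoch_nonvanishing_def, rule_format, of 0] by (simp add: g_def)
    show "1 - g * P \<noteq> 0"
      using abz[unfolded qpoch_nonvanishing_def, rule_format, of "Suc k"] by (simp add: g_def P_def)
  qed
  have apbz: "a * p * b * z = g * p" and abzp: "a * b * z * p = g * p"
    by (simp_all add: g_def mult_ac)
  have pP: "p * p ^ k = P"
    by (simp add: P_def)
  have "t a (Suc k) = X * z * (1 - a) / ((1 - P) * (1 - g))"
    using ne unfolding t_def phi21_term_def g_def[symmetric] X_def
    by (simp add: qpoch_Suc_left[of a] qpoch_Suc_left[of b] qpoch_Suc_left[of g] qpoch_Suc[of p] pP
        field_simps)
  then have "(1 - g) * t a (Suc k) = X * z * (1 - a) / (1 - P)"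
    using ne by simp
  moreover have "t (a * p) (Suc k) = X * z * (1 - a * P) / ((1 - P) * (1 - g * P))"
    using ne unfolding t_def phi21_term_def apbz X_def
    by (simp add: qpoch_Suc_left[of b] qpoch_Suc[of "a * p"] qpoch_Suc[of p] qpoch_Suc[of "g * p"]
        mult.assoc pP field_simps)
  ultimately have "(1 - g) * t a (Suc k) - (1 - a * z) * t (a * p) (Suc k)
      = X * z * (1 - a) / (1 - P) - (1 - a * z) * (X * z * (1 - a * P) / ((1 - P) * (1 - g * P)))"
    by simp
  also have "\<dots> = a * z * (X * z * (1 - a * P) * (1 - b * P) / ((1 - P) * (1 - g * P)) - X)"
    using ne(3,5) unfolding g_def by (simp add: divide_simps) algebra
  also have "X * z * (1 - a * P) * (1 - b * P) / ((1 - P) * (1 - g * P)) = (1 - b) * s (Suc k)"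
    using ne unfolding s_def phi21_term_def abzp X_def
    by (simp add: qpoch_Suc[of _ p k] mult.assoc pP field_simps)
  also have "X = (1 - b) * s k"
    by (simp add: s_def phi21_term_def X_def abzp)
  finally show "(1 - a * b * z) * t a (Suc k) - (1 - a * z) * t (a * p) (Suc k)
          = a * z * (1 - b) * (s (Suc k) - s k)"
    by (simp add: g_def algebra_simps)
qed

lemma phi21_contiguous:
  assumes p: "norm p < 1" and z: "norm z < 1" and abz: "qpoch_nonvanishing (a * b * z) p"
  shows "(1 - a * b * z) * (\<Sum>k. phi21_term a b (a * b * z) p z k)
           = (1 - a * z) * (\<Sum>k. phi21_term (a * p) b (a * p * b * z) p z k)"
proof -
  define d where "d k = (1 - a * b * z) * phi21_term a b (a * b * z) p z k
                        - (1 - a * z) * phi21_term (a * p) b (a * p * b * z) p z k" for k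
  define s where "s = phi21_term (a * p) (b * p) (a * b * z * p) p z"
  have pp: "qpoch_nonvanishing p p"
    using p by (intro qpoch_nonvanishing_if_norm_less) auto
  have abzp: "qpoch_nonvanishing (a * b * z * p) p" and apbz: "qpoch_nonvanishing (a * p * b * z) p"
    using qpoch_nonvanishing_shift[OF abz, of 1] by (simp_all add: mult_ac)
  have d: "d 0 = a * z * (1 - b) * s 0" "d (Suc k) = a * z * (1 - b) * (s (Suc k) - s k)" for k
    unfolding d_def s_def by (rule phi21_contiguous_terms[OF pp abz])+
  have partial: "(\<Sum>k<Suc n. d k) = a * z * (1 - b) * s n" for n
    by (induction n) (simp_all add: d algebra_simps)
  have "s \<longlonglongrightarrow> 0"
    unfolding s_def by (rule summable_LIMSEQ_zero[OF summable_phi21_term[OF p abzp z]])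
  then have "(\<lambda>n. \<Sum>k<Suc n. d k) \<longlonglongrightarrow> 0"
    unfolding partial by (rule tendsto_mult_right_zero)
  then have "d sums 0"
    unfolding sums_def by (rule LIMSEQ_imp_Suc)
  moreover have "d sums ((1 - a * b * z) * (\<Sum>k. phi21_term a b (a * b * z) p z k)
                         - (1 - a * z) * (\<Sum>k. phi21_term (a * p) b (a * p * b * z) p z k))"
    unfolding d_def
    by (intro sums_diff sums_mult summable_sums summable_phi21_term p z abz apbz)
  ultimately show ?thesis
    using sums_unique2 by fastforce
qed

lemma phi21_contiguous_iterate:
  assumes p: "norm p < 1" and z: "norm z < 1" and abz: "qpoch_nonvanishing (a * b * z) p"
  shows "(\<Sum>k. phi21_term a b (a * b * z) p z k) * qpoch (a * b * z) p N
           = qpoch (a * z) p N * (\<Sum>k. phi21_term (a * p ^ N) b (a * p ^ N * b * z) p z k)"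
  using abz
proof (induction N arbitrary: a)
  case 0
  then show ?case by simp
next
  case (Suc N)
  have apbz: "qpoch_nonvanishing (a * p * b * z) p"
    using qpoch_nonvanishing_shift[OF Suc.prems, of 1] by (simp add: mult_ac)
  have "(\<Sum>k. phi21_term a b (a * b * z) p z k) * qpoch (a * b * z) p (Suc N)
        = ((1 - a * b * z) * (\<Sum>k. phi21_term a b (a * b * z) p z k)) * qpoch (a * p * b * z) p N"
    by (simp add: qpoch_Suc_left mult_ac)
  also have "\<dots> = (1 - a * z) * ((\<Sum>k. phi21_term (a * p) b (a * p * b * z) p z k) * qpoch (a * p * b * z) p N)"
    by (simp add: phi21_contiguous[OF p z Suc.prems])
  also have "\<dots> = (1 - a * z) * (qpoch (a * p * z) p N
                    * (\<Sum>k. phi21_term (a * p * p ^ N) b (a * p * p ^ N * b * z) p z k))"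
    by (simp add: Suc.IH[OF apbz])
  also have "\<dots> = qpoch (a * z) p (Suc N) * (\<Sum>k. phi21_term (a * p ^ Suc N) b (a * p ^ Suc N * b * z) p z k)"
    by (simp add: qpoch_Suc_left mult_ac)
  finally show ?case .
qed

lemma LIMSEQ_phi21_shift:
  assumes p: "norm p < 1" and z: "norm z < 1"
  shows "(\<lambda>N. \<Sum>k. phi21_term (a * p ^ N) b (a * p ^ N * b * z) p z k) \<longlonglongrightarrow> (\<Sum>k. phi21_term 0 b 0 p z k)"
proof -
  have pp: "qpoch_nonvanishing p p"
    using p by (intro qpoch_nonvanishing_if_norm_less) auto
  obtain P where P: "\<And>k. norm (inverse (qpoch p p k)) \<le> P"
    using qpoch_inverse_bounded[OF p pp] by blast
  have a0: "(\<lambda>N. a * p ^ N) \<longlonglongrightarrow> 0"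
    using p by (intro tendsto_mult_right_zero LIMSEQ_power_zero) auto
  then have abz0: "(\<lambda>N. a * p ^ N * b * z) \<longlonglongrightarrow> 0"
    by (intro tendsto_mult_left_zero)
  then have "\<forall>\<^sub>F N in sequentially. norm (a * p ^ N * b * z) < (1 - norm p) / 2"
    using p by (intro order_tendstoD) (auto intro: tendsto_norm_zero)
  then obtain N0 where N0: "\<And>N. N \<ge> N0 \<Longrightarrow> norm (a * p ^ N * b * z) \<le> (1 - norm p) / 2"
    unfolding eventually_sequentially by (meson less_imp_le)
  define M where "M k = exp (norm a / (1 - norm p)) * exp (norm b / (1 - norm p)) * (P * 2) * norm z ^ k" for k
  have bound: "norm (phi21_term (a * p ^ N) b (a * p ^ N * b * z) p z k) \<le> M k" if "N \<ge> N0" for N k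
    unfolding M_def
  proof (rule norm_phi21_term_le[OF p _ order_refl P])
    show "norm (a * p ^ N) \<le> norm a"
      using p by (simp add: norm_mult norm_power power_le_one mult_right_le_one_le)
    show "norm (inverse (qpoch (a * p ^ N * b * z) p j)) \<le> 2" for j
      using norm_qpoch_ge_half[OF p N0[OF that]]
      by (simp add: norm_inverse inverse_le_imp_le)
  qed
  show ?thesis
  proof (rule tannerys_theorem[THEN conjunct2, THEN conjunct2])
    show "(\<lambda>N. phi21_term (a * p ^ N) b (a * p ^ N * b * z) p z k) \<longlonglongrightarrow> phi21_term 0 b 0 p z k" for k
      unfolding phi21_term_def using a0 abz0 qpoch_nonzero[OF pp]
      by (intro tendsto_intros) auto
    show "\<forall>\<^sub>F (k, N) in sequentially \<times>\<^sub>F sequentially.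
            norm (phi21_term (a * p ^ N) b (a * p ^ N * b * z) p z k) \<le> M k"
      unfolding eventually_prod_sequentially using bound by auto
    show "summable M"
      unfolding M_def using z by (intro summable_mult summable_geometric) simp
  qed simp
qed

lemma suminf_phi21_mult_qpoch_inf:
  assumes p: "norm p < 1" and z: "norm z < 1" and abz: "qpoch_nonvanishing (a * b * z) p"
  shows "(\<Sum>k. phi21_term a b (a * b * z) p z k) * qpoch_inf (a * b * z) p
           = qpoch_inf (a * z) p * (\<Sum>k. phi21_term 0 b 0 p z k)"
proof (rule LIMSEQ_unique)
  show "(\<lambda>N. (\<Sum>k. phi21_term a b (a * b * z) p z k) * qpoch (a * b * z) p N)
          \<longlonglongrightarrow> (\<Sum>k. phi21_term a b (a * b * z) p z k) * qpoch_inf (a * b * z) p"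
    by (intro tendsto_intros LIMSEQ_qpoch p)
  show "(\<lambda>N. (\<Sum>k. phi21_term a b (a * b * z) p z k) * qpoch (a * b * z) p N)
          \<longlonglongrightarrow> qpoch_inf (a * z) p * (\<Sum>k. phi21_term 0 b 0 p z k)"
    unfolding phi21_contiguous_iterate[OF p z abz]
    by (intro tendsto_intros LIMSEQ_qpoch LIMSEQ_phi21_shift p z)
qed

theorem q_gauss_sums:
  assumes p: "norm p < 1" and z: "norm z < 1" and abz: "qpoch_nonvanishing (a * b * z) p"
  shows "phi21_term a b (a * b * z) p z
           sums (qpoch_inf (a * z) p * qpoch_inf (b * z) p / (qpoch_inf (a * b * z) p * qpoch_inf z p))"
proof -
  txt \<open>The reduction to first parameter \<open>0\<close> also evaluates the series with parameters
    \<open>(b, 0)\<close> and \<open>(1, 0)\<close>; all terms of the latter but the first vanish.\<close>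
  define E where "E = (\<Sum>k. phi21_term 0 0 0 p z k)"
  have nonvanishing_0: "qpoch_nonvanishing (x * 0 * z) p" for x
    by (simp add: qpoch_nonvanishing_def)
  have "(\<Sum>k. phi21_term 0 b 0 p z k) = qpoch_inf (b * z) p * E"
    using suminf_phi21_mult_qpoch_inf[OF p z nonvanishing_0, of b]
    by (simp add: E_def phi21_term_commute[of 0 b])
  moreover have "qpoch_inf z p * E = 1"
  proof -
    have "phi21_term 1 0 0 p z k = (if k = 0 then 1 else 0)" for k
      by (cases k) (simp_all add: phi21_term_def qpoch_Suc_left)
    then have "(\<Sum>k. phi21_term 1 0 0 p z k) = 1"
      using sums_single[of 0 "\<lambda>_. 1::complex"] by (simp add: sums_iff)
    then show ?thesis
      using suminf_phi21_mult_qpoch_inf[OF p z nonvanishing_0, of 1] by (simp add: E_def)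
  qed
  ultimately have "(\<Sum>k. phi21_term a b (a * b * z) p z k) * qpoch_inf (a * b * z) p * qpoch_inf z p
                   = qpoch_inf (a * z) p * qpoch_inf (b * z) p"
    using suminf_phi21_mult_qpoch_inf[OF p z abz] by (metis mult.assoc mult.commute mult_1_right)
  moreover have "qpoch_inf (a * b * z) p \<noteq> 0" "qpoch_inf z p \<noteq> 0"
    using qpoch_inf_nonzero[OF p abz] qpoch_inf_nonzero[OF p qpoch_nonvanishing_if_norm_less[OF _ z]] p
    by auto
  ultimately have "(\<Sum>k. phi21_term a b (a * b * z) p z k)
      = qpoch_inf (a * z) p * qpoch_inf (b * z) p / (qpoch_inf (a * b * z) p * qpoch_inf z p)"
    by (simp add: field_simps)
  then show ?thesis
    using summable_sums[OF summable_phi21_term[OF p abz z, of a b]] by simp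
qed

section \<open>A Bailey pair\<close>

abbreviation qfact :: "complex \<Rightarrow> nat \<Rightarrow> complex" where
  "qfact q m \<equiv> qpoch (q\<^sup>2) (q\<^sup>2) m"

lemma norm_power_less_one:
  fixes q :: "'a :: real_normed_div_algebra"
  assumes "norm q < 1" and "0 < k"
  shows "norm (q ^ k) < 1"
  using assms by (simp add: norm_power power_less_one_iff)

lemma power_neq_one: "norm (q :: complex) < 1 \<Longrightarrow> 0 < k \<Longrightarrow> q ^ k \<noteq> 1"
  using norm_power_less_one[of q k] by auto

lemma one_plus_power_neq_zero: "norm (q :: complex) < 1 \<Longrightarrow> 0 < k \<Longrightarrow> 1 + q ^ k \<noteq> 0"
  using norm_power_less_one[of q k] by (auto simp: add_eq_0_iff)

lemma qfact_Suc: "qfact q (Suc m) = qfact q m * (1 - q ^ (2 * m + 2))"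
  by (simp add: qpoch_Suc power_mult[symmetric] power_add[symmetric] mult_ac)

lemma qfact_nonzero: "norm q < 1 \<Longrightarrow> qfact q m \<noteq> 0"
proof (induction m)
  case (Suc m)
  then show ?case
    using power_neq_one[of q "2 * m + 2"] by (simp add: qfact_Suc)
qed simp

lemma qfact_Suc_cancel:
  assumes "norm q < 1"
  shows "(1 - q ^ (2 * k + 2)) / (qfact q (Suc k) * R) = 1 / (qfact q k * R)"
proof -
  have "1 - q ^ (2 * k + 2) \<noteq> 0"
    using power_neq_one[OF assms, of "2 * k + 2"] by simp
  then show ?thesis
    unfolding qfact_Suc by simp
qed

lemma qfact_telescoping_step:
  assumes q: "norm q < 1" and "m < n"
  shows "(1 - q ^ (2 * m + 1)) / (qfact q (n - m) * qfact q (n + m + 1))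
           + q ^ (2 * m + 1) / (qfact q (n - Suc m) * qfact q (n + m + 1) * (1 + q ^ (2 * n + 1)))
         = 1 / (qfact q (n - m) * qfact q (n + m) * (1 + q ^ (2 * n + 1)))"
proof -
  define X where "X = q ^ (2 * m + 1)"
  define Y where "Y = q ^ (2 * (n - m))"
  define Z where "Z = q ^ (2 * n + 1)"
  have Z: "Z = X * Y"
    unfolding X_def Y_def Z_def power_add[symmetric] using \<open>m < n\<close>
    by (intro arg_cong[where f = "power q"]) simp
  have nm: "n - m = Suc (n - Suc m)"
    using \<open>m < n\<close> by simp
  have Qm: "qfact q (n - m) = qfact q (n - Suc m) * (1 - Y)"
    unfolding Y_def nm qfact_Suc by simp
  have "q ^ (2 * (n + m) + 2) = X * Z"
    unfolding X_def Z_def power_add[symmetric] by (rule arg_cong[where f = "power q"]) simp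
  then have Qp: "qfact q (n + m + 1) = qfact q (n + m) * (1 - X * Z)"
    using qfact_Suc[of q "n + m"] by simp
  have "qfact q (n - Suc m) \<noteq> 0" "qfact q (n + m) \<noteq> 0" "1 - Y \<noteq> 0" "1 - X * Z \<noteq> 0" "1 + Z \<noteq> 0"
    using qfact_nonzero[OF q, of "n - m"] qfact_nonzero[OF q, of "n + m + 1"]
      qfact_nonzero[OF q, of "n + m"] qfact_nonzero[OF q, of "n - Suc m"]
      one_plus_power_neq_zero[OF q, of "2 * n + 1"]
    unfolding Qm Qp Z_def by simp_all
  then have "(1 - X) / (qfact q (n - m) * qfact q (n + m + 1))
      + X / (qfact q (n - Suc m) * qfact q (n + m + 1) * (1 + Z))
      = 1 / (qfact q (n - m) * qfact q (n + m) * (1 + Z))"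
    unfolding Qm Qp Z by (simp add: divide_simps) algebra
  then show ?thesis
    by (simp add: X_def Z_def)
qed

lemma sum_qfact_telescoping:
  assumes q: "norm q < 1" and "m \<le> n"
  shows "(\<Sum>r = m..n. (1 - q ^ (2 * r + 1)) * q ^ (r\<^sup>2 - m\<^sup>2) / (qfact q (n - r) * qfact q (n + r + 1)))
           = 1 / (qfact q (n - m) * qfact q (n + m) * (1 + q ^ (2 * n + 1)))"
  using \<open>m \<le> n\<close>
proof (induction "n - m" arbitrary: m)
  case 0
  define X where "X = q ^ (2 * n + 1)"
  have "m = n"
    using 0 by simp
  have "X * X = q ^ (2 * (n + n) + 2)"
    unfolding X_def power_add[symmetric] by (rule arg_cong[where f = "power q"]) simp
  then have "qfact q (n + n + 1) = qfact q (n + n) * ((1 - X) * (1 + X))"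
    using qfact_Suc[of q "n + n"] by (simp add: algebra_simps)
  then show ?case
    using \<open>m = n\<close> power_neq_one[OF q, of "2 * n + 1"] qfact_nonzero[OF q, of "n + n"]
    by (simp add: X_def)
next
  case (Suc d)
  define f where "f r = (1 - q ^ (2 * r + 1)) * q ^ (r\<^sup>2 - m\<^sup>2) / (qfact q (n - r) * qfact q (n + r + 1))" for r
  have mn: "m < n" "d = n - Suc m"
    using Suc by simp_all
  have shift: "f r = q ^ (2 * m + 1)
      * ((1 - q ^ (2 * r + 1)) * q ^ (r\<^sup>2 - (Suc m)\<^sup>2) / (qfact q (n - r) * qfact q (n + r + 1)))"
    if "Suc m \<le> r" for r
  proof -
    have "r\<^sup>2 - m\<^sup>2 = (2 * m + 1) + (r\<^sup>2 - (Suc m)\<^sup>2)"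
      using that power_mono[OF that, of 2] by (simp add: power2_eq_square)
    then show ?thesis
      by (simp add: f_def power_add)
  qed
  have "(\<Sum>r = m..n. f r) = f m + (\<Sum>r = Suc m..n. f r)"
    using mn by (intro sum.atLeast_Suc_atMost) simp
  also have "(\<Sum>r = Suc m..n. f r) = q ^ (2 * m + 1) * (\<Sum>r = Suc m..n.
      (1 - q ^ (2 * r + 1)) * q ^ (r\<^sup>2 - (Suc m)\<^sup>2) / (qfact q (n - r) * qfact q (n + r + 1)))"
    unfolding sum_distrib_left by (rule sum.cong) (simp_all add: shift)
  also have "\<dots> = q ^ (2 * m + 1) / (qfact q (n - Suc m) * qfact q (n + m + 1) * (1 + q ^ (2 * n + 1)))"
    using Suc.hyps(1)[OF mn(2)] mn by simp
  also have "f m + \<dots> = 1 / (qfact q (n - m) * qfact q (n + m) * (1 + q ^ (2 * n + 1)))"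
    unfolding f_def using qfact_telescoping_step[OF q mn(1)] by simp
  finally show ?case
    by (simp add: f_def)
qed

definition alt_qfact_sum :: "complex \<Rightarrow> nat \<Rightarrow> complex" where
  "alt_qfact_sum q N = (\<Sum>k\<le>N. (-1) ^ k / (qfact q k * qfact q (N - k)))"

lemma alt_qfact_sum_pascal:
  assumes q: "norm q < 1"
  shows "alt_qfact_sum q (Suc (Suc N)) * (1 - q ^ (2 * N + 4))
           = (\<Sum>k\<le>Suc N. (-1) ^ Suc k * ((1 - q ^ (2 * k)) / (qfact q k * qfact q (Suc N - k))))"
proof -
  define M where "M = Suc (Suc N)"
  define u where "u k = 1 / (qfact q k * qfact q (Suc N - k))" for k
  define A where "A k = (1 - q ^ (2 * k)) / (qfact q k * qfact q (M - k))" for k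
  define B where "B k = q ^ (2 * k) * ((1 - q ^ (2 * (M - k))) / (qfact q k * qfact q (M - k)))" for k
  have "alt_qfact_sum q M * (1 - q ^ (2 * N + 4)) = (\<Sum>k\<le>M. (-1) ^ k * A k + (-1) ^ k * B k)"
    unfolding alt_qfact_sum_def sum_distrib_right
  proof (rule sum.cong[OF refl])
    fix k assume "k \<in> {..M}"
    then have "q ^ (2 * N + 4) = q ^ (2 * k) * q ^ (2 * (M - k))"
      unfolding power_add[symmetric] by (intro arg_cong[where f = "power q"]) (simp add: M_def)
    then show "(-1) ^ k / (qfact q k * qfact q (M - k)) * (1 - q ^ (2 * N + 4)) = (-1) ^ k * A k + (-1) ^ k * B k"
      by (simp add: A_def B_def diff_divide_distrib add_divide_distrib algebra_simps)
  qed
  also have "\<dots> = (\<Sum>k\<le>M. (-1) ^ k * A k) + (\<Sum>k\<le>M. (-1) ^ k * B k)"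
    by (rule sum.distrib)
  also have "(\<Sum>k\<le>M. (-1) ^ k * A k) = (\<Sum>k\<le>Suc N. (-1) ^ Suc k * u k)"
  proof -
    have "A (Suc k) = u k" for k
      using qfact_Suc_cancel[OF q, of k "qfact q (Suc N - k)"] by (simp add: A_def u_def M_def)
    then show ?thesis
      unfolding M_def by (subst sum.atMost_Suc_shift) (simp add: A_def del: sum.atMost_Suc)
  qed
  also have "(\<Sum>k\<le>M. (-1) ^ k * B k) = (\<Sum>k\<le>Suc N. (-1) ^ k * (q ^ (2 * k) * u k))"
  proof -
    have "B k = q ^ (2 * k) * u k" if "k \<le> Suc N" for k
    proof -
      have "M - k = Suc (Suc N - k)"
        using that by (simp add: M_def)
      then have "(1 - q ^ (2 * (M - k))) / (qfact q k * qfact q (M - k)) = u k"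
        using qfact_Suc_cancel[OF q, of "Suc N - k" "qfact q k"] by (simp add: u_def mult.commute)
      then show ?thesis
        by (simp add: B_def)
    qed
    moreover have "B (Suc (Suc N)) = 0"
      by (simp add: B_def M_def)
    ultimately show ?thesis
      unfolding M_def by (subst sum.atMost_Suc) (simp del: sum.atMost_Suc)
  qed
  also have "(\<Sum>k\<le>Suc N. (-1) ^ Suc k * u k) + (\<Sum>k\<le>Suc N. (-1) ^ k * (q ^ (2 * k) * u k))
      = (\<Sum>k\<le>Suc N. (-1) ^ Suc k * ((1 - q ^ (2 * k)) * u k))"
    by (simp add: sum.distrib[symmetric] algebra_simps del: sum.atMost_Suc)
  finally show ?thesis
    by (simp add: M_def u_def)
qed

lemma alt_qfact_sum_rec:
  assumes q: "norm q < 1"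
  shows "alt_qfact_sum q (Suc (Suc N)) * (1 - q ^ (2 * N + 4)) = alt_qfact_sum q N"
proof -
  have "alt_qfact_sum q (Suc (Suc N)) * (1 - q ^ (2 * N + 4))
      = (\<Sum>k\<le>N. (-1) ^ k * ((1 - q ^ (2 * k + 2)) / (qfact q (Suc k) * qfact q (N - k))))"
    unfolding alt_qfact_sum_pascal[OF q] by (simp add: sum.atMost_Suc_shift del: sum.atMost_Suc)
  also have "\<dots> = alt_qfact_sum q N"
    unfolding alt_qfact_sum_def
    using qfact_Suc_cancel[OF q, of _ "qfact q (N - _)"] by (intro sum.cong) simp_all
  finally show ?thesis .
qed

lemma alt_qfact_sum_even:
  assumes q: "norm q < 1"
  shows "alt_qfact_sum q (2 * n) * qpoch (q ^ 4) (q ^ 4) n = 1"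
proof (induction n)
  case 0
  then show ?case
    by (simp add: alt_qfact_sum_def)
next
  case (Suc n)
  have "q ^ 4 * (q ^ 4) ^ n = q ^ (2 * (2 * n) + 4)"
    unfolding power_mult[symmetric] power_add[symmetric] by (rule arg_cong[where f = "power q"]) simp
  then have "qpoch (q ^ 4) (q ^ 4) (Suc n) = qpoch (q ^ 4) (q ^ 4) n * (1 - q ^ (2 * (2 * n) + 4))"
    by (simp add: qpoch_Suc)
  then have "alt_qfact_sum q (2 * Suc n) * qpoch (q ^ 4) (q ^ 4) (Suc n)
      = (alt_qfact_sum q (Suc (Suc (2 * n))) * (1 - q ^ (2 * (2 * n) + 4))) * qpoch (q ^ 4) (q ^ 4) n"
    by (simp add: mult_ac)
  also have "\<dots> = 1"
    unfolding alt_qfact_sum_rec[OF q] by (rule Suc.IH)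
  finally show ?case .
qed

lemma sum_symmetric_reindex:
  fixes f :: "nat \<Rightarrow> 'a :: field"
  shows "(\<Sum>j = - int n..int n. (-1) powi j * (f (n - nat \<bar>j\<bar>) * f (n + nat \<bar>j\<bar>)))
           = (-1) ^ n * (\<Sum>k\<le>2 * n. (-1) ^ k * (f k * f (2 * n - k)))"
  unfolding sum_distrib_left
proof (rule sym, rule sum.reindex_bij_witness[where j = "\<lambda>k. int k - int n" and i = "\<lambda>j. nat (j + int n)"])
  fix k assume "k \<in> {..2 * n}"
  then show "int k - int n \<in> {- int n..int n}" and "nat (int k - int n + int n) = k"
    by auto
  have "(-1 :: 'a) powi (int k - int n) = (-1) ^ k / (-1) ^ n"
    by (simp add: power_int_diff)
  also have "\<dots> = (-1) ^ n * (-1) ^ k"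
    by (cases "even n") simp_all
  moreover have "f (n - nat \<bar>int k - int n\<bar>) * f (n + nat \<bar>int k - int n\<bar>) = f k * f (2 * n - k)"
  proof (cases "k \<le> n")
    case True
    then have "n - nat \<bar>int k - int n\<bar> = k" "n + nat \<bar>int k - int n\<bar> = 2 * n - k"
      by simp_all
    then show ?thesis
      by simp
  next
    case False
    then have "n - nat \<bar>int k - int n\<bar> = 2 * n - k" "n + nat \<bar>int k - int n\<bar> = k"
      using \<open>k \<in> {..2 * n}\<close> by simp_all
    then show ?thesis
      by (simp add: mult.commute)
  qed
  ultimately show "(-1) powi (int k - int n) * (f (n - nat \<bar>int k - int n\<bar>) * f (n + nat \<bar>int k - int n\<bar>))
                   = (-1) ^ n * ((-1) ^ k * (f k * f (2 * n - k)))"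
    by simp
qed auto

lemma power_int_diff_squares:
  assumes "\<bar>j\<bar> \<le> int r"
  shows "x powi (int r ^ 2 - j ^ 2) = x ^ (r\<^sup>2 - (nat \<bar>j\<bar>)\<^sup>2)"
proof -
  have "(nat \<bar>j\<bar>)\<^sup>2 \<le> r\<^sup>2"
    using assms by (intro power_mono) auto
  then have "int r ^ 2 - j ^ 2 = int (r\<^sup>2 - (nat \<bar>j\<bar>)\<^sup>2)"
    by (simp add: of_nat_diff)
  then show ?thesis
    by simp
qed

lemma bailey_alpha_sum_exchange:
  fixes q :: complex and D :: "nat \<Rightarrow> complex"
  shows "(\<Sum>r\<le>n. (1 - q ^ (2 * r + 1)) * (\<Sum>j = - int r..int r. (-1) powi j * q powi (int r ^ 2 - j ^ 2)) / D r)
         = (\<Sum>j = - int n..int n. (-1) powi j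
              * (\<Sum>r = nat \<bar>j\<bar>..n. (1 - q ^ (2 * r + 1)) * q ^ (r\<^sup>2 - (nat \<bar>j\<bar>)\<^sup>2) / D r))"
proof -
  define h where "h r j = (-1) powi j * ((1 - q ^ (2 * r + 1)) * q ^ (r\<^sup>2 - (nat \<bar>j\<bar>)\<^sup>2) / D r)" for r j
  have "(\<Sum>r\<le>n. (1 - q ^ (2 * r + 1)) * (\<Sum>j = - int r..int r. (-1) powi j * q powi (int r ^ 2 - j ^ 2)) / D r)
      = (\<Sum>r\<in>{..n}. \<Sum>j\<in>{j \<in> {- int n..int n}. \<bar>j\<bar> \<le> int r}. h r j)"
  proof (rule sum.cong[OF refl])
    fix r assume "r \<in> {..n}"
    then have r: "{j \<in> {- int n..int n}. \<bar>j\<bar> \<le> int r} = {- int r..int r}"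
      by auto
    have "(-1) powi j * q powi (int r ^ 2 - j ^ 2) * ((1 - q ^ (2 * r + 1)) / D r) = h r j"
      if "j \<in> {- int r..int r}" for j
    proof -
      have "\<bar>j\<bar> \<le> int r"
        using that by auto
      then show ?thesis
        by (simp add: h_def power_int_diff_squares)
    qed
    have "(1 - q ^ (2 * r + 1)) * (\<Sum>j = - int r..int r. (-1) powi j * q powi (int r ^ 2 - j ^ 2)) / D r
        = (\<Sum>j = - int r..int r. (-1) powi j * q powi (int r ^ 2 - j ^ 2)) * ((1 - q ^ (2 * r + 1)) / D r)"
      by simp
    also have "\<dots> = (\<Sum>j = - int r..int r. h r j)"
      unfolding sum_distrib_right by (rule sum.cong[OF refl]) fact
    finally show "(1 - q ^ (2 * r + 1)) * (\<Sum>j = - int r..int r. (-1) powi j * q powi (int r ^ 2 - j ^ 2)) / D r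
        = (\<Sum>j\<in>{j \<in> {- int n..int n}. \<bar>j\<bar> \<le> int r}. h r j)"
      unfolding r .
  qed
  also have "\<dots> = (\<Sum>j\<in>{- int n..int n}. \<Sum>r\<in>{r \<in> {..n}. \<bar>j\<bar> \<le> int r}. h r j)"
    by (rule sum.swap_restrict) auto
  also have "\<dots> = (\<Sum>j = - int n..int n. (-1) powi j
              * (\<Sum>r = nat \<bar>j\<bar>..n. (1 - q ^ (2 * r + 1)) * q ^ (r\<^sup>2 - (nat \<bar>j\<bar>)\<^sup>2) / D r))"
  proof (rule sum.cong[OF refl])
    fix j assume "j \<in> {- int n..int n}"
    then have "{r \<in> {..n}. \<bar>j\<bar> \<le> int r} = {nat \<bar>j\<bar>..n}"
      by auto
    then show "(\<Sum>r\<in>{r \<in> {..n}. \<bar>j\<bar> \<le> int r}. h r j)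
        = (-1) powi j * (\<Sum>r = nat \<bar>j\<bar>..n. (1 - q ^ (2 * r + 1)) * q ^ (r\<^sup>2 - (nat \<bar>j\<bar>)\<^sup>2) / D r)"
      by (simp add: h_def sum_distrib_left)
  qed
  finally show ?thesis .
qed

lemma bailey_pair:
  assumes q: "norm q < 1"
  shows "(\<Sum>r\<le>n. (1 - q ^ (2 * r + 1)) * (\<Sum>j = - int r..int r. (-1) powi j * q powi (int r ^ 2 - j ^ 2))
            / (qfact q (n - r) * qfact q (n + r + 1)))
         = (-1) ^ n / ((1 + q ^ (2 * n + 1)) * qpoch (q ^ 4) (q ^ 4) n)"
proof -
  have "alt_qfact_sum q (2 * n) * qpoch (q ^ 4) (q ^ 4) n = 1"
    by (rule alt_qfact_sum_even[OF q])
  then have alt: "alt_qfact_sum q (2 * n) = 1 / qpoch (q ^ 4) (q ^ 4) n"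
    by (metis nonzero_eq_divide_eq mult_zero_right zero_neq_one)
  have "(\<Sum>r\<le>n. (1 - q ^ (2 * r + 1)) * (\<Sum>j = - int r..int r. (-1) powi j * q powi (int r ^ 2 - j ^ 2))
            / (qfact q (n - r) * qfact q (n + r + 1)))
      = (\<Sum>j = - int n..int n.
           (-1) powi j * (1 / (qfact q (n - nat \<bar>j\<bar>) * qfact q (n + nat \<bar>j\<bar>) * (1 + q ^ (2 * n + 1)))))"
    unfolding bailey_alpha_sum_exchange
    by (intro sum.cong refl arg_cong[where f = "(*) _"] sum_qfact_telescoping[OF q]) auto
  also have "\<dots> = (\<Sum>j = - int n..int n.
      (-1) powi j * (1 / qfact q (n - nat \<bar>j\<bar>) * (1 / qfact q (n + nat \<bar>j\<bar>)))) / (1 + q ^ (2 * n + 1))"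
    by (simp add: sum_divide_distrib)
  also have "\<dots> = (-1) ^ n * alt_qfact_sum q (2 * n) / (1 + q ^ (2 * n + 1))"
    unfolding sum_symmetric_reindex[where f = "\<lambda>k. 1 / qfact q k"] alt_qfact_sum_def by simp
  finally show ?thesis
    unfolding alt by (simp add: ac_simps)
qed

section \<open>Bailey's lemma\<close>

lemma summable_square_geometric:
  fixes s :: real
  assumes "0 \<le> s" and "s < 1"
  shows "summable (\<lambda>n. (real n + 1)\<^sup>2 * s ^ n)"
proof -
  define one where "one = (\<lambda>n::nat. 1::real)"
  have "summable (\<lambda>n. diffs one n * x ^ n)" if "norm x < 1" for x :: real
    using that by (rule termdiff_converges) (simp add: one_def summable_geometric)
  then have "summable (\<lambda>n. diffs (diffs one) n * s ^ n)"
    using assms by (intro termdiff_converges[of s 1]) auto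
  then show ?thesis
  proof (rule summable_comparison_test'[where N = 0])
    show "norm ((real n + 1)\<^sup>2 * s ^ n) \<le> diffs (diffs one) n * s ^ n" for n
      using assms by (simp add: diffs_def one_def power2_eq_square algebra_simps)
  qed
qed

lemma sums_triangle_swap:
  fixes g :: "nat \<Rightarrow> nat \<Rightarrow> complex"
  assumes abs: "summable (\<lambda>n. \<Sum>r\<le>n. norm (g n r))"
    and columns: "\<And>r. (\<lambda>k. g (r + k) r) sums c r"
  shows "summable (\<lambda>n. \<Sum>r\<le>n. g n r)" and "c sums (\<Sum>n. \<Sum>r\<le>n. g n r)"
proof -
  define T :: "(nat \<times> nat) set" where "T = Sigma UNIV (\<lambda>n. {..n})"
  have "(\<lambda>x. norm (case_prod g x)) summable_on T"
    unfolding T_def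
  proof (subst Infinite_Sum.abs_summable_on_Sigma_iff, intro conjI ballI)
    show "(\<lambda>r. norm (case_prod g (n, r))) summable_on {..n}" for n
      by simp
    show "(\<lambda>n. norm (\<Sum>\<^sub>\<infinity>r\<in>{..n}. norm (case_prod g (n, r)))) summable_on UNIV"
      using abs by (intro norm_summable_imp_summable_on) (simp add: sum_nonneg)
  qed
  then obtain H where H: "(case_prod g has_sum H) T"
    using abs_summable_summable summable_on_def by blast
  have rows: "(\<lambda>n. \<Sum>r\<le>n. g n r) sums H"
    using has_sum_Sigma'[OF H[unfolded T_def]] by (intro has_sum_imp_sums) simp
  have "bij_betw (\<lambda>(r, k). (r + k, r)) UNIV T"
    unfolding T_def by (rule bij_betw_byWitness[where f' = "\<lambda>(n, r). (r, n - r)"]) auto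
  from has_sum_reindex_bij_betw[OF this, of "case_prod g" H] H
  have H': "((\<lambda>(r, k). g (r + k) r) has_sum H) (UNIV \<times> UNIV)"
    by (simp add: case_prod_unfold)
  have "((\<lambda>k. g (r + k) r) has_sum c r) UNIV" for r
  proof -
    have "(\<lambda>k. g (r + k) r) summable_on UNIV"
      using summable_on_SigmaD1[OF has_sum_imp_summable[OF H']] by simp
    then show ?thesis
      using columns[of r] by (metis has_sum_infsum has_sum_imp_sums sums_unique2)
  qed
  then have "c sums H"
    using has_sum_Sigma'[OF H'] by (intro has_sum_imp_sums) simp
  then show "summable (\<lambda>n. \<Sum>r\<le>n. g n r)" and "c sums (\<Sum>n. \<Sum>r\<le>n. g n r)"
    using rows by (simp_all add: sums_iff)
qed

lemma bailey_column_term: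
  assumes p: "norm p < 1"
  shows "qpoch (p / a) p (r + k) * qpoch (p / c) p (r + k) * (a * c) ^ (r + k)
           / (qpoch p p k * qpoch p p (r + k + r + 1))
         = qpoch (p / a) p r * qpoch (p / c) p r * (a * c) ^ r / qpoch p p (2 * r + 1)
           * phi21_term (p / a * p ^ r) (p / c * p ^ r) (p * p ^ (2 * r + 1)) p (a * c) k"
proof -
  have pp: "qpoch_nonvanishing p p"
    using p by (intro qpoch_nonvanishing_if_norm_less) auto
  have "r + k + r + 1 = (2 * r + 1) + k"
    by simp
  then have "qpoch p p (r + k + r + 1) = qpoch p p (2 * r + 1) * qpoch (p * p ^ (2 * r + 1)) p k"
    by (simp only: qpoch_add)
  moreover have "qpoch (p / a) p (r + k) = qpoch (p / a) p r * qpoch (p / a * p ^ r) p k"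
    and "qpoch (p / c) p (r + k) = qpoch (p / c) p r * qpoch (p / c * p ^ r) p k"
    by (rule qpoch_add)+
  ultimately show ?thesis
    using qpoch_nonzero[OF pp] qpoch_nonzero[OF qpoch_nonvanishing_shift[OF pp]]
    by (simp add: phi21_term_def power_add field_simps)
qed

lemma bailey_column_sums:
  assumes p: "norm p < 1" and a: "a \<noteq> 0" and c: "c \<noteq> 0"
    and pa: "qpoch_nonvanishing (p * a) p" and pc: "qpoch_nonvanishing (p * c) p"
    and ac: "norm (a * c) < 1"
  shows "(\<lambda>k. qpoch (p / a) p (r + k) * qpoch (p / c) p (r + k) * (a * c) ^ (r + k)
                / (qpoch p p k * qpoch p p (r + k + r + 1)))
           sums (qpoch (p / a) p r * qpoch (p / c) p r / (qpoch (p * a) p r * qpoch (p * c) p r) * (a * c) ^ r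
                 * (qpoch_inf (p * a) p * qpoch_inf (p * c) p / (qpoch_inf p p * qpoch_inf (a * c) p)))"
proof -
  define x where "x = p / a * p ^ r"
  define y where "y = p / c * p ^ r"
  define z where "z = a * c"
  define C where "C = qpoch (p / a) p r * qpoch (p / c) p r * z ^ r / qpoch p p (2 * r + 1)"
  have pp: "qpoch_nonvanishing p p"
    using p by (intro qpoch_nonvanishing_if_norm_less) auto
  have xyz: "x * y * z = p * p ^ (2 * r + 1)"
    using a c by (simp add: x_def y_def z_def mult_2 mult_2_right power_add field_simps)
  have xz: "x * z = p * c * p ^ r" and yz: "y * z = p * a * p ^ r"
    using a c by (simp_all add: x_def y_def z_def field_simps)
  have xyz_nv: "qpoch_nonvanishing (x * y * z) p"
    unfolding xyz by (rule qpoch_nonvanishing_shift[OF pp])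
  have "(\<lambda>k. C * phi21_term x y (x * y * z) p z k)
          sums (C * (qpoch_inf (x * z) p * qpoch_inf (y * z) p / (qpoch_inf (x * y * z) p * qpoch_inf z p)))"
    using ac by (intro sums_mult q_gauss_sums p xyz_nv) (simp add: z_def)
  moreover have "qpoch (p / a) p (r + k) * qpoch (p / c) p (r + k) * (a * c) ^ (r + k)
                   / (qpoch p p k * qpoch p p (r + k + r + 1))
                 = C * phi21_term x y (x * y * z) p z k" for k
    unfolding bailey_column_term[OF p] xyz by (simp add: C_def x_def y_def z_def)
  moreover have "C * (qpoch_inf (x * z) p * qpoch_inf (y * z) p / (qpoch_inf (x * y * z) p * qpoch_inf z p))
      = qpoch (p / a) p r * qpoch (p / c) p r / (qpoch (p * a) p r * qpoch (p * c) p r) * (a * c) ^ r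
        * (qpoch_inf (p * a) p * qpoch_inf (p * c) p / (qpoch_inf p p * qpoch_inf (a * c) p))"
  proof -
    have "qpoch_inf (p * a) p = qpoch (p * a) p r * qpoch_inf (y * z) p"
      and "qpoch_inf (p * c) p = qpoch (p * c) p r * qpoch_inf (x * z) p"
      and "qpoch_inf p p = qpoch p p (2 * r + 1) * qpoch_inf (x * y * z) p"
      unfolding xyz xz yz by (rule qpoch_inf_split[OF p])+
    moreover have "qpoch (p * a) p r \<noteq> 0" "qpoch (p * c) p r \<noteq> 0" "qpoch p p (2 * r + 1) \<noteq> 0"
      using pa pc pp by (simp_all add: qpoch_nonzero)
    moreover have "qpoch_inf (x * y * z) p \<noteq> 0" "qpoch_inf z p \<noteq> 0"
      using xyz_nv ac p by (simp_all add: qpoch_inf_nonzero qpoch_nonvanishing_if_norm_less z_def)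
    ultimately show ?thesis
      by (simp add: C_def z_def field_simps)
  qed
  ultimately show ?thesis
    by simp
qed

lemma norm_bailey_double_term_le:
  fixes \<alpha> :: "nat \<Rightarrow> complex"
  assumes p: "norm p < 1" and \<alpha>: "\<And>r. norm (\<alpha> r) \<le> M * (real r + 1)"
  obtains B where "\<And>n r. r \<le> n \<Longrightarrow>
    norm (qpoch (p / a) p n * qpoch (p / c) p n * (a * c) ^ n * (\<alpha> r / (qpoch p p (n - r) * qpoch p p (n + r + 1))))
      \<le> B * (real n + 1) * norm (a * c) ^ n"
proof -
  have "qpoch_nonvanishing p p"
    using p by (intro qpoch_nonvanishing_if_norm_less) auto
  then obtain P where P: "\<And>k. norm (inverse (qpoch p p k)) \<le> P"
    using qpoch_inverse_bounded[OF p] by blast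
  have "0 \<le> M" and "0 \<le> P"
    using order_trans[OF norm_ge_zero \<alpha>[of 0]] order_trans[OF norm_ge_zero P[of 0]] by simp_all
  define B where "B = exp (norm (p / a) / (1 - norm p)) * exp (norm (p / c) / (1 - norm p)) * (P * P) * M"
  have "norm (qpoch (p / a) p n * qpoch (p / c) p n * (a * c) ^ n * (\<alpha> r / (qpoch p p (n - r) * qpoch p p (n + r + 1))))
      \<le> B * (real n + 1) * norm (a * c) ^ n" if "r \<le> n" for n r
  proof -
    have "norm (qpoch (p / a) p n * qpoch (p / c) p n * (a * c) ^ n * (\<alpha> r / (qpoch p p (n - r) * qpoch p p (n + r + 1))))
        = norm (qpoch (p / a) p n) * norm (qpoch (p / c) p n) * norm (a * c) ^ n
          * (norm (\<alpha> r) * (norm (inverse (qpoch p p (n - r))) * norm (inverse (qpoch p p (n + r + 1)))))"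
      by (simp add: norm_mult norm_divide norm_power norm_inverse divide_inverse)
    also have "\<dots> \<le> exp (norm (p / a) / (1 - norm p)) * exp (norm (p / c) / (1 - norm p)) * norm (a * c) ^ n
          * (M * (real n + 1) * (P * P))"
    proof (intro mult_mono norm_qpoch_le[OF p order_refl] P order_refl)
      show "norm (\<alpha> r) \<le> M * (real n + 1)"
        using \<alpha>[of r] mult_left_mono[of "real r + 1" "real n + 1" M] that \<open>0 \<le> M\<close> by simp
    qed (simp_all add: \<open>0 \<le> M\<close> \<open>0 \<le> P\<close>)
    finally show ?thesis
      by (simp add: B_def mult_ac)
  qed
  then show ?thesis
    using that by blast
qed

lemma summable_bailey_double_norm:
  fixes \<alpha> :: "nat \<Rightarrow> complex"
  assumes p: "norm p < 1" and ac: "norm (a * c) < 1" and \<alpha>: "\<And>r. norm (\<alpha> r) \<le> M * (real r + 1)"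
  shows "summable (\<lambda>n. \<Sum>r\<le>n. norm (qpoch (p / a) p n * qpoch (p / c) p n * (a * c) ^ n
                                   * (\<alpha> r / (qpoch p p (n - r) * qpoch p p (n + r + 1)))))"
proof -
  obtain B where B: "\<And>n r. r \<le> n \<Longrightarrow>
    norm (qpoch (p / a) p n * qpoch (p / c) p n * (a * c) ^ n * (\<alpha> r / (qpoch p p (n - r) * qpoch p p (n + r + 1))))
      \<le> B * (real n + 1) * norm (a * c) ^ n"
    using norm_bailey_double_term_le[OF p \<alpha>] by blast
  show ?thesis
  proof (rule summable_comparison_test')
    show "summable (\<lambda>n. B * ((real n + 1)\<^sup>2 * norm (a * c) ^ n))"
      using ac by (intro summable_mult summable_square_geometric) auto
    fix n
    have "(\<Sum>r\<le>n. norm (qpoch (p / a) p n * qpoch (p / c) p n * (a * c) ^ n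
                        * (\<alpha> r / (qpoch p p (n - r) * qpoch p p (n + r + 1)))))
        \<le> (\<Sum>r\<le>n. B * (real n + 1) * norm (a * c) ^ n)"
      by (intro sum_mono B) simp
    also have "\<dots> = B * ((real n + 1)\<^sup>2 * norm (a * c) ^ n)"
      by (simp add: power2_eq_square algebra_simps)
    finally show "norm (\<Sum>r\<le>n. norm (qpoch (p / a) p n * qpoch (p / c) p n * (a * c) ^ n
                        * (\<alpha> r / (qpoch p p (n - r) * qpoch p p (n + r + 1)))))
        \<le> B * ((real n + 1)\<^sup>2 * norm (a * c) ^ n)"
      by (simp add: sum_nonneg)
  qed
qed

text \<open>Bailey's lemma relative to \<open>p\<close> in base \<open>p\<close>, for \<open>n \<rightarrow> \<infinity>\<close>, with \<open>\<rho>\<^sub>1 = p / a\<close> and \<open>\<rho>\<^sub>2 = p / c\<close>.\<close>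

theorem bailey_lemma:
  fixes \<alpha> :: "nat \<Rightarrow> complex"
  assumes p: "norm p < 1" and a: "a \<noteq> 0" and c: "c \<noteq> 0"
    and pa: "qpoch_nonvanishing (p * a) p" and pc: "qpoch_nonvanishing (p * c) p"
    and ac: "norm (a * c) < 1"
    and \<alpha>: "\<And>r. norm (\<alpha> r) \<le> M * (real r + 1)"
  defines "\<beta> n \<equiv> \<Sum>r\<le>n. \<alpha> r / (qpoch p p (n - r) * qpoch p p (n + r + 1))"
  shows "summable (\<lambda>n. qpoch (p / a) p n * qpoch (p / c) p n * (a * c) ^ n * \<beta> n)"
    and "(\<lambda>r. qpoch (p / a) p r * qpoch (p / c) p r / (qpoch (p * a) p r * qpoch (p * c) p r) * (a * c) ^ r * \<alpha> r)
           sums (qpoch_inf p p * qpoch_inf (a * c) p / (qpoch_inf (p * a) p * qpoch_inf (p * c) p)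
                 * (\<Sum>n. qpoch (p / a) p n * qpoch (p / c) p n * (a * c) ^ n * \<beta> n))"
proof -
  define g where "g n r = qpoch (p / a) p n * qpoch (p / c) p n * (a * c) ^ n
                          * (\<alpha> r / (qpoch p p (n - r) * qpoch p p (n + r + 1)))" for n r
  define L where "L r = qpoch (p / a) p r * qpoch (p / c) p r / (qpoch (p * a) p r * qpoch (p * c) p r)
                        * (a * c) ^ r * \<alpha> r" for r
  define K where "K = qpoch_inf (p * a) p * qpoch_inf (p * c) p / (qpoch_inf p p * qpoch_inf (a * c) p)"
  have rows: "(\<Sum>r\<le>n. g n r) = qpoch (p / a) p n * qpoch (p / c) p n * (a * c) ^ n * \<beta> n" for n
    by (simp add: g_def \<beta>_def sum_distrib_left)
  have "summable (\<lambda>n. \<Sum>r\<le>n. norm (g n r))"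
    unfolding g_def by (rule summable_bailey_double_norm[OF p ac \<alpha>])
  moreover have "(\<lambda>k. g (r + k) r) sums (L r * K)" for r
    using sums_mult[OF bailey_column_sums[OF p a c pa pc ac, of r], of "\<alpha> r"]
    by (simp add: g_def L_def K_def mult_ac)
  ultimately have "summable (\<lambda>n. \<Sum>r\<le>n. g n r)" and LK: "(\<lambda>r. L r * K) sums (\<Sum>n. \<Sum>r\<le>n. g n r)"
    by (rule sums_triangle_swap)+
  then show "summable (\<lambda>n. qpoch (p / a) p n * qpoch (p / c) p n * (a * c) ^ n * \<beta> n)"
    by (simp add: rows)
  have "K \<noteq> 0"
    using p pa pc ac by (simp add: K_def qpoch_inf_nonzero qpoch_nonvanishing_if_norm_less)
  then have "L sums ((\<Sum>n. \<Sum>r\<le>n. g n r) / K)"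
    using sums_divide[OF LK, of K] by simp
  moreover have "(\<Sum>n. \<Sum>r\<le>n. g n r) / K
      = qpoch_inf p p * qpoch_inf (a * c) p / (qpoch_inf (p * a) p * qpoch_inf (p * c) p)
        * (\<Sum>n. qpoch (p / a) p n * qpoch (p / c) p n * (a * c) ^ n * \<beta> n)"
    by (simp add: rows K_def ac_simps)
  ultimately show "L sums (qpoch_inf p p * qpoch_inf (a * c) p / (qpoch_inf (p * a) p * qpoch_inf (p * c) p)
                 * (\<Sum>n. qpoch (p / a) p n * qpoch (p / c) p n * (a * c) ^ n * \<beta> n))"
    by simp
qed

lemma norm_bailey_alpha_le:
  fixes q :: complex
  assumes q: "norm q < 1"
  shows "norm ((1 - q ^ (2 * r + 1)) * (\<Sum>j = - int r..int r. (-1) powi j * q powi (int r ^ 2 - j ^ 2)))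
           \<le> 4 * (real r + 1)"
proof -
  have "norm (1 - q ^ (2 * r + 1)) \<le> 2"
    using norm_triangle_ineq4[of 1 "q ^ (2 * r + 1)"] norm_power_less_one[OF q, of "2 * r + 1"] by simp
  moreover have "norm (\<Sum>j = - int r..int r. (-1) powi j * q powi (int r ^ 2 - j ^ 2)) \<le> (\<Sum>j = - int r..int r. 1)"
  proof (rule order_trans[OF norm_sum sum_mono])
    fix j assume "j \<in> {- int r..int r}"
    then have "\<bar>j\<bar> \<le> int r"
      by auto
    then show "norm ((-1) powi j * q powi (int r ^ 2 - j ^ 2)) \<le> 1"
      using q by (simp add: power_int_diff_squares norm_mult norm_power_int norm_power power_le_one)
  qed
  ultimately have "norm ((1 - q ^ (2 * r + 1)) * (\<Sum>j = - int r..int r. (-1) powi j * q powi (int r ^ 2 - j ^ 2)))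
      \<le> 2 * (2 * real r + 1)"
    unfolding norm_mult by (intro mult_mono) auto
  then show ?thesis
    by simp
qed

lemma qpoch_nonvanishing_square:
  fixes q a :: complex
  assumes "\<And>k::nat. k \<ge> 1 \<Longrightarrow> a * q ^ (2 * k) \<noteq> 1"
  shows "qpoch_nonvanishing (q\<^sup>2 * a) (q\<^sup>2)"
  unfolding qpoch_nonvanishing_def
proof
  fix k
  have "q\<^sup>2 * a * (q\<^sup>2) ^ k = a * q ^ (2 * Suc k)"
    unfolding power_mult power_Suc by (simp only: mult_ac)
  also have "\<dots> \<noteq> 1"
    by (rule assms) simp
  finally show "q\<^sup>2 * a * (q\<^sup>2) ^ k \<noteq> 1" .
qed

theorem theorem8p1:
  fixes q a c :: complex
  assumes "0 < cmod q" and "cmod q < 1"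
    and "a \<noteq> 0" and "c \<noteq> 0"
    and "\<And>k::nat. k \<ge> 1 \<Longrightarrow> a * q ^ (2 * k) \<noteq> 1"
    and "\<And>k::nat. k \<ge> 1 \<Longrightarrow> c * q ^ (2 * k) \<noteq> 1"
    and "cmod (a * c) < 1"
  shows "summable (\<lambda>n. qpoch (q\<^sup>2 / a) (q\<^sup>2) n * qpoch (q\<^sup>2 / c) (q\<^sup>2) n
              / ((1 + q ^ (2 * n + 1)) * qpoch (q ^ 4) (q ^ 4) n) * (- (a * c)) ^ n)
     \<and> (\<lambda>n. (1 - q ^ (2 * n + 1))
              * (qpoch (q\<^sup>2 / a) (q\<^sup>2) n * qpoch (q\<^sup>2 / c) (q\<^sup>2) n)
              / (qpoch (q\<^sup>2 * a) (q\<^sup>2) n * qpoch (q\<^sup>2 * c) (q\<^sup>2) n)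
              * (a * c) ^ n
              * (\<Sum>j = - int n..int n. (-1) powi j * q powi (int n ^ 2 - j ^ 2)))
       sums
       (qpoch_inf (q\<^sup>2) (q\<^sup>2) * qpoch_inf (a * c) (q\<^sup>2)
          / (qpoch_inf (q\<^sup>2 * a) (q\<^sup>2) * qpoch_inf (q\<^sup>2 * c) (q\<^sup>2))
        * (\<Sum>n. qpoch (q\<^sup>2 / a) (q\<^sup>2) n * qpoch (q\<^sup>2 / c) (q\<^sup>2) n
              / ((1 + q ^ (2 * n + 1)) * qpoch (q ^ 4) (q ^ 4) n) * (- (a * c)) ^ n))"
proof -
  define \<alpha> where "\<alpha> r = (1 - q ^ (2 * r + 1)) * (\<Sum>j = - int r..int r. (-1) powi j * q powi (int r ^ 2 - j ^ 2))" for r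
  have q2: "norm (q\<^sup>2) < 1"
    using assms(2) by (simp add: norm_power power_less_one_iff)
  note bailey = bailey_lemma[OF q2 assms(3,4) qpoch_nonvanishing_square[OF assms(5)]
      qpoch_nonvanishing_square[OF assms(6)] assms(7), where \<alpha> = \<alpha> and M = 4]
  have "(\<Sum>r\<le>n. \<alpha> r / (qfact q (n - r) * qfact q (n + r + 1)))
          = (-1) ^ n / ((1 + q ^ (2 * n + 1)) * qpoch (q ^ 4) (q ^ 4) n)" for n
    unfolding \<alpha>_def by (rule bailey_pair[OF assms(2)])
  then have "qpoch (q\<^sup>2 / a) (q\<^sup>2) n * qpoch (q\<^sup>2 / c) (q\<^sup>2) n * (a * c) ^ n
               * (\<Sum>r\<le>n. \<alpha> r / (qfact q (n - r) * qfact q (n + r + 1)))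
             = qpoch (q\<^sup>2 / a) (q\<^sup>2) n * qpoch (q\<^sup>2 / c) (q\<^sup>2) n
               / ((1 + q ^ (2 * n + 1)) * qpoch (q ^ 4) (q ^ 4) n) * (- (a * c)) ^ n" for n
    by (simp add: power_minus[of "a * c"])
  moreover have "norm (\<alpha> r) \<le> 4 * (real r + 1)" for r
    unfolding \<alpha>_def by (rule norm_bailey_alpha_le[OF assms(2)])
  ultimately show ?thesis
    using bailey by (simp add: \<alpha>_def mult_ac)
qed

end
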